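(* Let $n,\ell$ be positive integers, $e=\gcd(n,\ell)$, $A=A_n^\ell$, $\mathcal{P}$ the set of non-crossing partitions of $\underline{e}$, and $\Omega,\Omega^{-1}$ the syzygy and cosyzygy functors applied elementwise. For $p\in\mathcal{P}$ and $1\le i\le e$: (1) $\Omega(\mathcal{S}'_{p,i})=\mathcal{L}'_{m_1(p),i}$; (2) $\Omega^{-1}(\mathcal{L}'_{p,i})=\mathcal{S}'_{m_2(p),i}$; (3) $\Omega^{-1}(\mathcal{S}'_{p,i})=\mathcal{L}'_{m_2(p),k_i}$; (4) $\Omega(\mathcal{L}'_{p,i})=\mathcal{S}'_{m_1(p),\overline{k_i+1}}$, where $k_i$ is computed with respect to $p$ and $\bar a$ is taken modulo $e$.
   Context: $A_m^\ell=kQ/I$ ($k$ algebraically closed), $Q$ the cyclic quiver with vertices $1,\dots,m$, arrows $i\to i+1$, $m\to 1$, $I$ generated by paths of length $\ell+1$. Indecomposable modules are uniserial with composition factors $S_i,S_{i+1},\dots$ (indices mod $m$) from the top. $M^i_{j,t}$ is the indecomposable module with top $S_i$, socle $S_j$, $S_i$ occurring $t+1$ times. For $a\in\mathbb{Z}$, $\bar a\in\underline{e}$ with $a\equiv \bar a\pmod e$. For a non-crossing partition $p$ of $\underline{e}$ (no $a<x<b<y$ with $a,b$ in one block, $x,y$ in another), $p(i)$ is the block of $i$, $k_i$ the first element of $p(i)$ in the sequence $\overline{i-1},\overline{i-2},\dots,\overline{i-e}=i$, $\widehat{i}=\{i,\overline{i+1},\dots,k_i\}$. Write $\ell=de$.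 Over $A_e^\ell$: $\mathcal{L}_{p,k}=\{M^i_{k_i,l_i}\mid1\le i\le e\}$ with $l_i=0$ if $\widehat{i}\cap p(k)=\emptyset$ else $d-1$; $\mathcal{S}_{p,k}$ the same but with $l_i=0$ also when $i=k$. $\mathcal{L}'_{p,k}$ (resp. $\mathcal{S}'_{p,k}$) is the set of indecomposable $A_n^\ell$-modules $X$, with top $S_i$ say, such that some $Y\in\mathcal{L}_{p,k}$ (resp. $\mathcal{S}_{p,k}$) has the same length as $X$ and top $S_a$ with $a\equiv i\pmod e$ (this is the preimage under the covering functor $A_n^\ell$-$\underline{\mathrm{mod}}\to A_e^\ell$-$\underline{\mathrm{mod}}$ induced by quotienting the stable AR quiver by the Nakayama automorphism). $m_1(p)$ is the partition of $\underline{e}$ into orbits of $x\mapsto\overline{k_x+1}$; $m_2(p)$ is the partition into orbits of $x\mapsto\overline{\sigma^{-1}(x)-1}$ where $\sigma(x)=k_x$. *)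

theory Defs
  imports Main "HOL-Library.Disjoint_Sets"
begin

text \<open>Combinatorial model of the stable module category of the Nakayama algebra
  A_m^l = kQ/I (cyclic quiver with m vertices, relations all paths of length l+1).
  An indecomposable module is uniserial and is determined up to isomorphism by its top
  S_i (1 <= i <= m) and its length L (1 <= L <= l+1); we represent it by the pair (i, L).
  It is projective iff L = l+1.\<close>

type_synonym umod = "nat \<times> nat"  (* (index of top, length) *)

definition bar :: "nat \<Rightarrow> int \<Rightarrow> nat" where
  "bar e a = nat ((a - 1) mod int e) + 1"

definition noncrossing :: "nat \<Rightarrow> nat set set \<Rightarrow> bool" where
  "noncrossing e p \<longleftrightarrow> partition_on {1..e} p \<and>
     \<not> (\<exists>B1\<in>p. \<exists>B2\<in>p. B1 \<noteq> B2 \<and>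
          (\<exists>a b x y. a \<in> B1 \<and> b \<in> B1 \<and> x \<in> B2 \<and> y \<in> B2 \<and> a < x \<and> x < b \<and> b < y))"

definition block :: "nat set set \<Rightarrow> nat \<Rightarrow> nat set" where
  "block p i = (THE B. B \<in> p \<and> i \<in> B)"

definition rdist :: "nat \<Rightarrow> nat set set \<Rightarrow> nat \<Rightarrow> nat" where
  "rdist e p i = (LEAST r. 1 \<le> r \<and> bar e (int i - int r) \<in> block p i)"

definition kidx :: "nat \<Rightarrow> nat set set \<Rightarrow> nat \<Rightarrow> nat" where
  "kidx e p i = bar e (int i - int (rdist e p i))"

text \<open>hat i = {i, i+1, ..., k_i} (cyclically, modulo e).\<close>
definition hat :: "nat \<Rightarrow> nat set set \<Rightarrow> nat \<Rightarrow> nat set" where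
  "hat e p i = {bar e (int i + int s) | s. s \<le> e - rdist e p i}"

text \<open>M^i_{j,t} over A_e^l: top S_i, socle S_j, S_i occurring t+1 times.
  Its composition factors are S_i, S_{i+1}, ..., so its length is t*e + ((j-i) mod e) + 1.\<close>
definition Mmod :: "nat \<Rightarrow> nat \<Rightarrow> nat \<Rightarrow> nat \<Rightarrow> umod" where
  "Mmod e i j t = (i, t * e + nat ((int j - int i) mod int e) + 1)"

definition Lset :: "nat \<Rightarrow> nat \<Rightarrow> nat set set \<Rightarrow> nat \<Rightarrow> umod set" where
  "Lset e l p k = {Mmod e i (kidx e p i)
      (if hat e p i \<inter> block p k = {} then 0 else l div e - 1) | i. i \<in> {1..e}}"

definition Sset :: "nat \<Rightarrow> nat \<Rightarrow> nat set set \<Rightarrow> nat \<Rightarrow> umod set" where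
  "Sset e l p k = {Mmod e i (kidx e p i)
      (if hat e p i \<inter> block p k = {} \<or> i = k then 0 else l div e - 1) | i. i \<in> {1..e}}"

text \<open>Preimage under the covering functor A_n^l-stmod \<rightarrow> A_e^l-stmod: indecomposable
  A_n^l-modules X (top S_i, 1 <= i <= n) such that some Y in the given set has the same
  length and top S_a with a \<equiv> i (mod e).\<close>
definition lift :: "nat \<Rightarrow> nat \<Rightarrow> umod set \<Rightarrow> umod set" where
  "lift n e Y = {(i, len). i \<in> {1..n} \<and> (\<exists>a. (a, len) \<in> Y \<and> a mod e = i mod e)}"

definition Lset' :: "nat \<Rightarrow> nat \<Rightarrow> nat set set \<Rightarrow> nat \<Rightarrow> umod set" where
  "Lset' n l p k = lift n (gcd n l) (Lset (gcd n l) l p k)"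

definition Sset' :: "nat \<Rightarrow> nat \<Rightarrow> nat set set \<Rightarrow> nat \<Rightarrow> umod set" where
  "Sset' n l p k = lift n (gcd n l) (Sset (gcd n l) l p k)"

text \<open>Syzygy and cosyzygy of an indecomposable non-projective A_n^l-module (i, L):
  the projective cover P_i has factors S_i, ..., S_{i+l}, so the kernel has top S_{i+L}
  and length l+1-L; the injective envelope I_{i+L-1} has top S_{i+L-1-l}, so the cokernel
  has top S_{i+L-1-l} and length l+1-L.\<close>
definition syz :: "nat \<Rightarrow> nat \<Rightarrow> umod \<Rightarrow> umod" where
  "syz n l X = (bar n (int (fst X) + int (snd X)), l + 1 - snd X)"

definition cosyz :: "nat \<Rightarrow> nat \<Rightarrow> umod \<Rightarrow> umod" where
  "cosyz n l X = (bar n (int (fst X) + int (snd X) - 1 - int l), l + 1 - snd X)"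

text \<open>Elementwise application (projective modules are sent to zero, i.e. dropped).\<close>
definition Omega :: "nat \<Rightarrow> nat \<Rightarrow> umod set \<Rightarrow> umod set" where
  "Omega n l S = syz n l ` {X \<in> S. snd X \<le> l}"

definition Omega_inv :: "nat \<Rightarrow> nat \<Rightarrow> umod set \<Rightarrow> umod set" where
  "Omega_inv n l S = cosyz n l ` {X \<in> S. snd X \<le> l}"

definition orbit_partition :: "nat \<Rightarrow> (nat \<Rightarrow> nat) \<Rightarrow> nat set set" where
  "orbit_partition e f = {{(f ^^ j) x | j. True} | x. x \<in> {1..e}}"

definition m1 :: "nat \<Rightarrow> nat set set \<Rightarrow> nat set set" where
  "m1 e p = orbit_partition e (\<lambda>x. bar e (int (kidx e p x) + 1))"

definition m2 :: "nat \<Rightarrow> nat set set \<Rightarrow> nat set set" where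
  "m2 e p = orbit_partition e (\<lambda>x. bar e (int (inv_into {1..e} (kidx e p) x) - 1))"

end

theory Submission
  imports Defs "HOL-Combinatorics.Orbits"
begin

(* Over A_e^l, with l = d e, both S_{p,q} and L_{p,q} consist of one module M^a_{k_a, t_a} for
   each vertex a, and a syzygy computation gives
     Omega M^a_{k_a, t} = M^{k_a + 1}_{a, d-1-t},   Omega^-1 M^a_{k_a, t} = M^{k_a}_{a-1, d-1-t}.
   So everything rests on describing k and hat for m_1(p) and m_2(p).  Because p is non-crossing,
   a block meets the arc hat a = [a, k_a] only if it lies inside it; hence sigma = k, which
   preserves blocks and is a bijection, maps hat a and its complement onto themselves.  It follows
   that x |-> k_x + 1 preserves the arc [k_a + 1, a] and x |-> sigma^-1(x) - 1 preserves
   [k_a, a - 1].  The orbit of k_a + 1 (resp. k_a) thus stays in that arc and reaches its far end,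
   so in m_1(p) we get k_{k_a + 1} = a with hat = [k_a + 1, a], and in m_2(p) we get
   k_{k_a} = a - 1 with hat = [k_a, a - 1].  A block of m_i(p) meets this arc iff it is not
   inside (a, k_a] (resp. [a, k_a)), which turns the exponents t_a into d - 1 - t_a as required.
   Finally, Omega and Omega^-1 shift the top of a module by an amount depending only on its
   length, so they commute with the covering A_n^l -> A_e^l. *)

section \<open>Cyclic intervals modulo e\<close>

definition cdist :: "nat \<Rightarrow> nat \<Rightarrow> nat \<Rightarrow> nat" where
  "cdist e a z = nat ((int z - int a) mod int e)"

definition arc :: "nat \<Rightarrow> nat \<Rightarrow> nat \<Rightarrow> nat set" where
  "arc e b c = {z \<in> {1..e}. cdist e b z \<le> c}"

lemma cdist_self [simp]: "cdist e a a = 0"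
  by (simp add: cdist_def)

context
  fixes e :: nat
  assumes e_pos: "0 < e"
begin

lemma int_bar: "int (bar e x) = (x - 1) mod int e + 1"
  using e_pos by (simp add: bar_def)

lemma bar_in: "bar e x \<in> {1..e}"
  using e_pos by (simp add: bar_def nat_less_iff Suc_leI)

lemma bar_bounds [simp]: "Suc 0 \<le> bar e x" "bar e x \<le> e"
  using bar_in by auto

lemma int_bar_mod: "int (bar e x) mod int e = x mod int e"
  by (simp add: int_bar mod_add_left_eq)

lemma bar_eq_iff: "bar e x = bar e y \<longleftrightarrow> x mod int e = y mod int e"
  by (metis int_bar int_bar_mod of_nat_eq_iff add_right_cancel mod_diff_cong diff_add_cancel)

lemma bar_of_nat: "z \<in> {1..e} \<Longrightarrow> bar e (int z) = z"
  by (auto simp: bar_def mod_pos_pos_trivial nat_diff_distrib)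

lemma bar_eq_of_nat_iff: "z \<in> {1..e} \<Longrightarrow> bar e x = z \<longleftrightarrow> x mod int e = int z mod int e"
  by (metis bar_eq_iff bar_of_nat)

lemma bar_bar_add: "bar e (int (bar e x) + y) = bar e (x + y)"
  by (simp add: bar_eq_iff mod_add_left_eq int_bar_mod flip: mod_add_left_eq[of "int (bar e x)"])

lemma bar_add_mult: "bar e (x + k * int e) = bar e x"
  by (simp add: bar_eq_iff)

lemma bar_add_right_cancel:
  assumes "z \<in> {1..e}" "w \<in> {1..e}" "bar e (int z + k) = bar e (int w + k)"
  shows "z = w"
  using bar_bar_add[of "int z + k" "- k"] bar_bar_add[of "int w + k" "- k"] assms
  by (simp add: bar_of_nat)

lemma cdist_less: "cdist e a z < e"
  using e_pos by (simp add: cdist_def nat_less_iff)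

lemma int_cdist: "int (cdist e a z) = (int z - int a) mod int e"
  using e_pos by (simp add: cdist_def)

lemma cdist_bar: "cdist e a (bar e x) = nat ((x - int a) mod int e)"
  by (simp add: cdist_def mod_diff_left_eq int_bar_mod flip: mod_diff_left_eq[of "int (bar e x)"])

lemma cdist_bar_base: "cdist e (bar e x) z = nat ((int z - x) mod int e)"
  by (simp add: cdist_def mod_diff_right_eq int_bar_mod flip: mod_diff_right_eq[of _ "int (bar e x)"])

lemma bar_add_cdist: "z \<in> {1..e} \<Longrightarrow> bar e (int a + int (cdist e a z)) = z"
  by (simp add: bar_eq_of_nat_iff int_cdist mod_add_right_eq)

lemma cdist_inject: "z \<in> {1..e} \<Longrightarrow> w \<in> {1..e} \<Longrightarrow> cdist e a z = cdist e a w \<longleftrightarrow> z = w"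
  by (metis bar_add_cdist)

lemma cdist_eq_0_iff: "a \<in> {1..e} \<Longrightarrow> z \<in> {1..e} \<Longrightarrow> cdist e a z = 0 \<longleftrightarrow> z = a"
  using cdist_inject[of z a a] by simp

lemma cdist_bar_add: "c < e \<Longrightarrow> cdist e a (bar e (int a + int c)) = c"
  by (simp add: cdist_bar)

lemma cdist_shift: "cdist e (bar e (int b + k)) (bar e (int z + k)) = cdist e b z"
proof -
  have "cdist e (bar e (int b + k)) (bar e (int z + k)) = nat ((int (bar e (int z + k)) - (int b + k)) mod int e)"
    by (rule cdist_bar_base)
  also have "\<dots> = nat ((int z + k - (int b + k)) mod int e)"
    by (simp add: mod_diff_left_eq int_bar_mod flip: mod_diff_left_eq[of "int (bar e _)"])
  finally show ?thesis by (simp add: cdist_def)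
qed

lemma cdist_bar_add_base:
  assumes "c \<le> e"
  shows "cdist e (bar e (int b + int c)) z =
    (if c \<le> cdist e b z then cdist e b z - c else cdist e b z + e - c)"
proof -
  have "cdist e (bar e (int b + int c)) z = nat ((int z - int b - int c) mod int e)"
    by (simp add: cdist_bar_base algebra_simps)
  also have "(int z - int b - int c) mod int e = (int (cdist e b z) - int c) mod int e"
    by (simp add: int_cdist mod_diff_left_eq)
  also have "\<dots> = (if c \<le> cdist e b z then int (cdist e b z) - int c
                     else int (cdist e b z) - int c + int e)"
  proof (cases "c \<le> cdist e b z")
    case False
    have "(int (cdist e b z) - int c) mod int e = (int (cdist e b z) - int c + int e) mod int e"
      by simp
    also have "\<dots> = int (cdist e b z) - int c + int e"
      using False assms by (intro mod_pos_pos_trivial) auto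
    finally show ?thesis using False by simp
  qed (use cdist_less[of b z] in \<open>auto intro: mod_pos_pos_trivial\<close>)
  finally show ?thesis using assms by auto
qed

lemma cdist_reverse:
  "cdist e (bar e (int j + 1)) i = e - 1 - cdist e i j"
  "cdist e j (bar e (int i - 1)) = e - 1 - cdist e i j"
proof -
  have "(int i - int j - 1) mod int e = int e - 1 - (int j - int i) mod int e"
    using minus_mod_int_eq[of "int e" "int j - int i + 1"] by (simp add: algebra_simps)
  then have "nat ((int i - int j - 1) mod int e) = e - 1 - cdist e i j"
    using e_pos by (simp add: cdist_def nat_diff_distrib)
  then show "cdist e (bar e (int j + 1)) i = e - 1 - cdist e i j"
    "cdist e j (bar e (int i - 1)) = e - 1 - cdist e i j"
    by (simp_all add: cdist_bar_base cdist_bar algebra_simps)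
qed

lemma int_cdist_if:
  assumes "a \<in> {1..e}" "z \<in> {1..e}"
  shows "int (cdist e a z) = int z - int a + (if z < a then int e else 0)"
proof (cases "z < a")
  case True
  have "(int z - int a) mod int e = (int z - int a + int e) mod int e" by simp
  also have "\<dots> = int z - int a + int e"
    using True assms by (intro mod_pos_pos_trivial) auto
  finally show ?thesis using True by (simp add: int_cdist)
qed (use assms in \<open>auto simp: int_cdist mod_pos_pos_trivial\<close>)

lemma cyclic_order_cases:
  assumes "a \<in> {1..e}" "b \<in> {1..e}" "c \<in> {1..e}" "d \<in> {1..e}"
    and "0 < cdist e a b" "cdist e a b < cdist e a c" "cdist e a c < cdist e a d"
  shows "a < b \<and> b < c \<and> c < d \<or> d < a \<and> a < b \<and> b < c \<or>
         c < d \<and> d < a \<and> a < b \<or> b < c \<and> c < d \<and> d < a"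
proof -
  have dist: "int (cdist e a z) = int z - int a + (if z < a then int e else 0)" if "z \<in> {1..e}" for z
    using int_cdist_if[OF assms(1) that] .
  have "0 < int (cdist e a b)" "int (cdist e a b) < int (cdist e a c)"
    "int (cdist e a c) < int (cdist e a d)" "int (cdist e a d) < int e"
    using assms(5-7) cdist_less[of a d] by simp_all
  then show ?thesis
    unfolding dist[OF assms(2)] dist[OF assms(3)] dist[OF assms(4)]
    using assms(1-4) by (cases "b < a"; cases "c < a"; cases "d < a") auto
qed

lemma arc_eq_image: "c < e \<Longrightarrow> {bar e (int b + int s) | s. s \<le> c} = arc e b c"
  by (auto simp: arc_def cdist_bar_add intro!: exI[of _ "cdist e b _"] bar_add_cdist[symmetric])

lemma bar_shift_mem_arc:
  "z \<in> {1..e} \<Longrightarrow> bar e (int z + k) \<in> arc e (bar e (int b + k)) c \<longleftrightarrow> z \<in> arc e b c"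
  by (simp add: arc_def cdist_shift)

lemma arc_complement_end:
  assumes "c < e"
  shows "arc e (bar e (int b + int c)) (e - c - 1) = ({1..e} - arc e b c) \<union> {bar e (int b + int c)}"
proof -
  have "cdist e (bar e (int b + int c)) z \<le> e - c - 1 \<longleftrightarrow> c \<le> cdist e b z" for z
    using assms cdist_less[of b z] by (auto simp: cdist_bar_add_base)
  moreover have "z \<in> {1..e} \<Longrightarrow> cdist e b z = c \<longleftrightarrow> z = bar e (int b + int c)" for z
    by (metis assms bar_add_cdist cdist_bar_add)
  ultimately show ?thesis
    using assms by (auto simp: arc_def cdist_bar_add bar_add_cdist)
qed

lemma arc_complement_start:
  assumes "c < e" "b \<in> {1..e}"
  shows "arc e (bar e (int b + int c + 1)) (e - c - 1) = ({1..e} - arc e b c) \<union> {b}"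
proof -
  have "cdist e (bar e (int b + int (c + 1))) z \<le> e - c - 1 \<longleftrightarrow> cdist e b z = 0 \<or> c < cdist e b z" for z
    using assms cdist_less[of b z] by (auto simp only: cdist_bar_add_base) auto
  moreover have "bar e (int b + int c + 1) = bar e (int b + int (c + 1))"
    by (simp add: ac_simps)
  ultimately show ?thesis
    using assms(2) cdist_eq_0_iff[OF assms(2)] by (auto simp: arc_def)
qed

lemma cdist_bar_diff: "0 < s \<Longrightarrow> s \<le> e \<Longrightarrow> cdist e a (bar e (int a - int s)) = e - s"
proof -
  assume s: "0 < s" "s \<le> e"
  then have "int a - int s = int a + int (e - s) + (- 1) * int e"
    by simp
  then have "bar e (int a - int s) = bar e (int a + int (e - s))"
    by (simp only: bar_add_mult)
  then show ?thesis
    using s cdist_bar_add[of "e - s" a] by simp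
qed

end

section \<open>Orbit partitions\<close>

lemma orbit_subset_invariant:
  assumes "f ` A \<subseteq> A" "x \<in> A"
  shows "orbit f x \<subseteq> A"
proof
  fix y assume "y \<in> orbit f x"
  then show "y \<in> A"
    by induct (use assms in auto)
qed

lemma orbit_eq_of_mem:
  assumes "x \<in> orbit f x" "y \<in> orbit f x"
  shows "orbit f y = orbit f x"
  using orbit_trans[OF _ assms(2)] orbit_trans[OF _ orbit_swap[OF assms]] by blast

lemma inj_on_invariant_mem_iff:
  assumes "finite T" "inj_on f T" "A \<subseteq> T" "f ` A \<subseteq> A" "x \<in> T"
  shows "f x \<in> A \<longleftrightarrow> x \<in> A"
proof
  have "f ` A = A"
    using assms by (meson endo_inj_surj finite_subset inj_on_subset)
  moreover assume "f x \<in> A"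
  ultimately obtain y where "y \<in> A" "f x = f y"
    by blast
  then show "x \<in> A"
    using assms(2,3,5) by (metis inj_onD subsetD)
qed (use assms(4) in blast)

(* HOL's orbit f x only contains the iterates f^n x with n > 0. *)
lemma self_in_orbit_of_inj_on:
  assumes "finite T" "f ` T \<subseteq> T" "inj_on f T" "x \<in> T"
  shows "x \<in> orbit f x"
proof -
  have "bij_betw (perm_restrict f T) T T"
    using assms endo_inj_surj[of T f] by (simp add: bij_betw_def perm_restrict_def cong: bij_betw_cong)
  then have "perm_restrict f T permutes T"
    by (rule bij_imp_permutes) (simp add: perm_restrict_def)
  then have "x \<in> orbit (perm_restrict f T) x"
    using assms(1) by (intro permutation_self_in_orbit) (auto simp: permutation_permutes)
  moreover have "orbit (perm_restrict f T) x = orbit f x"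
    using assms by (intro orbit_cong0[of x T]) (auto simp: perm_restrict_def)
  ultimately show ?thesis
    by simp
qed

context
  fixes e :: nat and f :: "nat \<Rightarrow> nat"
  assumes maps: "f ` {1..e} \<subseteq> {1..e}" and inj: "inj_on f {1..e}"
begin

lemma self_in_orbit: "x \<in> {1..e} \<Longrightarrow> x \<in> orbit f x"
  using self_in_orbit_of_inj_on[OF _ maps inj] by blast

lemma block_orbit_partition:
  assumes "y \<in> {1..e}"
  shows "block (orbit_partition e f) y = orbit f y"
proof -
  have partition: "orbit_partition e f = orbit f ` {1..e}"
    unfolding orbit_partition_def using orbit_altdef_self_in[OF self_in_orbit] by auto
  show ?thesis
    unfolding block_def partition
  proof (rule the_equality)
    show "orbit f y \<in> orbit f ` {1..e} \<and> y \<in> orbit f y"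
      using assms self_in_orbit by blast
  next
    fix B assume "B \<in> orbit f ` {1..e} \<and> y \<in> B"
    then obtain x where "x \<in> {1..e}" "B = orbit f x" "y \<in> orbit f x"
      by blast
    then show "B = orbit f y"
      using orbit_eq_of_mem[OF self_in_orbit] by metis
  qed
qed

lemma orbit_partition_block_disjoint_iff:
  assumes "A \<subseteq> {1..e}" "f ` A \<subseteq> A" "q \<in> {1..e}"
  shows "block (orbit_partition e f) q \<inter> A = {} \<longleftrightarrow> q \<notin> A"
proof -
  have "f ` ({1..e} - A) \<subseteq> {1..e} - A"
    using inj_on_invariant_mem_iff[OF _ inj assms(1,2)] maps by blast
  then have "orbit f q \<subseteq> {1..e} - A" if "q \<notin> A"
    using assms(3) that by (intro orbit_subset_invariant) auto
  moreover have "q \<in> orbit f q"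
    using self_in_orbit[OF assms(3)] .
  ultimately show ?thesis
    unfolding block_orbit_partition[OF assms(3)] by blast
qed

end

lemma rdist_eqI:
  assumes "1 \<le> r" "bar e (int y - int r) \<in> block P y"
    and "\<And>s. 1 \<le> s \<Longrightarrow> s < r \<Longrightarrow> bar e (int y - int s) \<notin> block P y"
  shows "rdist e P y = r"
  unfolding rdist_def using assms by (intro Least_equality) (auto simp: not_le[symmetric])

lemma orbit_partition_kidx_hat:
  assumes maps: "f ` {1..e} \<subseteq> {1..e}" and inj: "inj_on f {1..e}"
    and b: "b \<in> {1..e}" and c: "c < e"
    and invariant: "f ` arc e b c \<subseteq> arc e b c"
    and arc_end: "bar e (int b + int c) \<in> orbit f b"
  shows "kidx e (orbit_partition e f) b = bar e (int b + int c)"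
    and "hat e (orbit_partition e f) b = arc e b c"
proof -
  let ?P = "orbit_partition e f"
  have e: "0 < e"
    using b by simp
  have "b \<in> arc e b c"
    using b by (simp add: arc_def)
  then have block_in_arc: "block ?P b \<subseteq> arc e b c"
    using block_orbit_partition[OF maps inj b] orbit_subset_invariant[OF invariant] by simp
  have "int b - int (e - c) = int b + int c + (- 1) * int e"
    using c by simp
  then have wrap_around: "bar e (int b - int (e - c)) = bar e (int b + int c)"
    by (simp only: bar_add_mult[OF e])
  have "rdist e ?P b = e - c"
  proof (rule rdist_eqI)
    show "1 \<le> e - c"
      using c by simp
    show "bar e (int b - int (e - c)) \<in> block ?P b"
      using arc_end wrap_around block_orbit_partition[OF maps inj b] by simp
  next
    fix s assume "1 \<le> s" "s < e - c"
    then have "c < cdist e b (bar e (int b - int s))"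
      using cdist_bar_diff[OF e] by simp
    then show "bar e (int b - int s) \<notin> block ?P b"
      using block_in_arc by (auto simp: arc_def)
  qed
  then show "kidx e ?P b = bar e (int b + int c)" and "hat e ?P b = arc e b c"
    using wrap_around c arc_eq_image[OF e c] by (simp_all add: kidx_def hat_def)
qed

section \<open>Non-crossing partitions\<close>

locale noncrossing_partition =
  fixes e :: nat and p :: "nat set set"
  assumes e_pos: "0 < e" and noncrossing: "noncrossing e p"
begin

abbreviation \<sigma> :: "nat \<Rightarrow> nat" where
  "\<sigma> \<equiv> kidx e p"

lemma partition: "partition_on {1..e} p"
  using noncrossing by (simp add: noncrossing_def)

lemma block_unique: "B \<in> p \<Longrightarrow> x \<in> B \<Longrightarrow> block p x = B"
  unfolding block_def using partition_onD2[OF partition]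
  by (intro the_equality) (auto simp: disjoint_def disjnt_def)

lemma block_in_partition: "x \<in> {1..e} \<Longrightarrow> block p x \<in> p"
  and mem_block: "x \<in> {1..e} \<Longrightarrow> x \<in> block p x"
  using partition_onD1[OF partition] block_unique by blast+

lemma block_subset: "x \<in> {1..e} \<Longrightarrow> block p x \<subseteq> {1..e}"
  using partition_onD1[OF partition] block_in_partition by blast

lemma block_eq: "x \<in> {1..e} \<Longrightarrow> y \<in> block p x \<Longrightarrow> block p y = block p x"
  using block_unique block_in_partition by blast

lemma rdist_bounds:
  assumes "x \<in> {1..e}"
  shows "1 \<le> rdist e p x" "rdist e p x \<le> e" and kidx_in_block: "\<sigma> x \<in> block p x"
proof -
  let ?P = "\<lambda>r. 1 \<le> r \<and> bar e (int x - int r) \<in> block p x"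
  have "bar e (int x - int e) = x"
    using bar_add_mult[OF e_pos, of "int x" "- 1"] bar_of_nat[OF e_pos assms] by simp
  then have "?P e"
    using e_pos mem_block[OF assms] by simp
  then show "1 \<le> rdist e p x" "rdist e p x \<le> e" "\<sigma> x \<in> block p x"
    unfolding rdist_def kidx_def using LeastI[of ?P] Least_le[of ?P] by auto
qed

lemma rdist_least: "1 \<le> s \<Longrightarrow> s < rdist e p x \<Longrightarrow> bar e (int x - int s) \<notin> block p x"
  unfolding rdist_def using not_less_Least by blast

lemma kidx_in: "\<sigma> x \<in> {1..e}"
  unfolding kidx_def by (rule bar_in[OF e_pos])

lemma block_kidx: "x \<in> {1..e} \<Longrightarrow> block p (\<sigma> x) = block p x"
  using block_eq kidx_in_block by blast

lemma kidx_eq: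
  assumes "x \<in> {1..e}"
  shows "\<sigma> x = bar e (int x + int (e - rdist e p x))"
proof -
  have "int x - int (rdist e p x) = int x + int (e - rdist e p x) + (- 1) * int e"
    using rdist_bounds[OF assms] by simp
  then show ?thesis
    by (simp only: kidx_def bar_add_mult[OF e_pos])
qed

lemma bar_kidx_add_rdist: "x \<in> {1..e} \<Longrightarrow> bar e (int (\<sigma> x) + int (rdist e p x)) = x"
  by (simp add: kidx_def bar_bar_add[OF e_pos] bar_of_nat[OF e_pos])

lemma rdist_complement_less: "x \<in> {1..e} \<Longrightarrow> e - rdist e p x < e"
  using e_pos rdist_bounds(1) by fastforce

lemma cdist_kidx: "x \<in> {1..e} \<Longrightarrow> cdist e x (\<sigma> x) = e - rdist e p x"
  unfolding kidx_eq by (intro cdist_bar_add[OF e_pos] rdist_complement_less)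

lemma hat_eq_arc: "x \<in> {1..e} \<Longrightarrow> hat e p x = arc e x (e - rdist e p x)"
  unfolding hat_def by (intro arc_eq_image[OF e_pos] rdist_complement_less)

lemma block_subset_hat:
  assumes x: "x \<in> {1..e}" and w: "w \<in> block p x"
  shows "w \<in> hat e p x"
proof (rule ccontr)
  assume "w \<notin> hat e p x"
  moreover have w_in: "w \<in> {1..e}"
    using block_subset[OF x] w by blast
  ultimately have far: "e - rdist e p x < cdist e x w"
    using x by (simp add: hat_eq_arc arc_def)
  define s where "s = e - cdist e x w"
  have "1 \<le> s" "s < rdist e p x"
    using far cdist_less[OF e_pos, of x w] unfolding s_def by auto
  moreover have "bar e (int x - int s) = w"
  proof -
    have "int x - int s = int x + int (cdist e x w) + (- 1) * int e"
      using cdist_less[OF e_pos, of x w] unfolding s_def by simp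
    then show ?thesis
      by (simp only: bar_add_mult[OF e_pos] bar_add_cdist[OF e_pos w_in])
  qed
  ultimately show False
    using rdist_least w by metis
qed

lemma kidx_inj: "inj_on \<sigma> {1..e}"
proof -
  (* if rdist i < rdist j, then i lies between \<sigma> j and j, against the minimality of rdist j *)
  have less_impossible: False
    if i: "i \<in> {1..e}" and j: "j \<in> {1..e}" and eq: "\<sigma> i = \<sigma> j"
      and less: "rdist e p i < rdist e p j" for i j
  proof -
    have "i \<in> block p j"
      using block_kidx[OF i] block_kidx[OF j] eq mem_block[OF i] by simp
    moreover have "bar e (int j - int (rdist e p j - rdist e p i)) = i"
    proof -
      have "i = bar e (int (\<sigma> j) + int (rdist e p i))"
        using bar_kidx_add_rdist[OF i] eq by simp
      also have "\<dots> = bar e (int j - int (rdist e p j) + int (rdist e p i))"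
        unfolding kidx_def by (rule bar_bar_add[OF e_pos])
      finally show ?thesis
        using less by (simp add: algebra_simps)
    qed
    moreover have "1 \<le> rdist e p j - rdist e p i" "rdist e p j - rdist e p i < rdist e p j"
      using less rdist_bounds(1)[OF i] by auto
    ultimately show False
      using rdist_least by metis
  qed
  show ?thesis
  proof (rule inj_onI)
    fix i j assume i: "i \<in> {1..e}" and j: "j \<in> {1..e}" and eq: "\<sigma> i = \<sigma> j"
    then have "rdist e p i = rdist e p j"
      using less_impossible[OF i j eq] less_impossible[OF j i eq[symmetric]] by fastforce
    then show "i = j"
      using eq bar_kidx_add_rdist[OF i] bar_kidx_add_rdist[OF j] by metis
  qed
qed

lemma kidx_image: "\<sigma> ` {1..e} = {1..e}"
  using kidx_in by (intro endo_inj_surj[OF _ _ kidx_inj]) auto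

lemma no_crossing:
  assumes "B \<in> p" "B' \<in> p" "B \<noteq> B'" "a \<in> B" "b \<in> B" "x \<in> B'" "y \<in> B'"
    and "a < x" "x < b" "b < y"
  shows False
proof -
  have "\<exists>a b x y. a \<in> B \<and> b \<in> B \<and> x \<in> B' \<and> y \<in> B' \<and> a < x \<and> x < b \<and> b < y"
    using assms(4-10) by (intro exI[of _ a] exI[of _ b] exI[of _ x] exI[of _ y]) simp
  then have "\<exists>B\<^sub>1\<in>p. \<exists>B\<^sub>2\<in>p. B\<^sub>1 \<noteq> B\<^sub>2 \<and>
      (\<exists>a b x y. a \<in> B\<^sub>1 \<and> b \<in> B\<^sub>1 \<and> x \<in> B\<^sub>2 \<and> y \<in> B\<^sub>2 \<and> a < x \<and> x < b \<and> b < y)"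
    using assms(1-3) by (intro bexI[of _ B] bexI[of _ B']) simp_all
  then show False
    using noncrossing unfolding noncrossing_def by (elim conjE notE)
qed

lemma no_cyclic_crossing:
  assumes "u\<^sub>1 \<in> {1..e}" "u\<^sub>2 \<in> {1..e}" "u\<^sub>3 \<in> block p u\<^sub>1" "u\<^sub>4 \<in> block p u\<^sub>2"
    and "block p u\<^sub>1 \<noteq> block p u\<^sub>2"
    and "0 < cdist e u\<^sub>1 u\<^sub>2" "cdist e u\<^sub>1 u\<^sub>2 < cdist e u\<^sub>1 u\<^sub>3" "cdist e u\<^sub>1 u\<^sub>3 < cdist e u\<^sub>1 u\<^sub>4"
  shows False
proof -
  note B\<^sub>1 = block_in_partition[OF assms(1)] mem_block[OF assms(1)]
    and B\<^sub>2 = block_in_partition[OF assms(2)] mem_block[OF assms(2)]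
    and B\<^sub>1\<^sub>2 = assms(5) and B\<^sub>2\<^sub>1 = assms(5)[symmetric]
  have "u\<^sub>3 \<in> {1..e}" "u\<^sub>4 \<in> {1..e}"
    using assms(1-4) block_subset by blast+
  then consider "u\<^sub>1 < u\<^sub>2" "u\<^sub>2 < u\<^sub>3" "u\<^sub>3 < u\<^sub>4" | "u\<^sub>4 < u\<^sub>1" "u\<^sub>1 < u\<^sub>2" "u\<^sub>2 < u\<^sub>3"
    | "u\<^sub>3 < u\<^sub>4" "u\<^sub>4 < u\<^sub>1" "u\<^sub>1 < u\<^sub>2" | "u\<^sub>2 < u\<^sub>3" "u\<^sub>3 < u\<^sub>4" "u\<^sub>4 < u\<^sub>1"
    using cyclic_order_cases[OF e_pos assms(1,2) _ _ assms(6-8)] by blast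
  then show False
  proof cases
    case 1
    then show False
      by (rule no_crossing[OF B\<^sub>1(1) B\<^sub>2(1) B\<^sub>1\<^sub>2 B\<^sub>1(2) assms(3) B\<^sub>2(2) assms(4)])
  next
    case 2
    then show False
      by (rule no_crossing[OF B\<^sub>2(1) B\<^sub>1(1) B\<^sub>2\<^sub>1 assms(4) B\<^sub>2(2) B\<^sub>1(2) assms(3)])
  next
    case 3
    then show False
      by (rule no_crossing[OF B\<^sub>1(1) B\<^sub>2(1) B\<^sub>1\<^sub>2 assms(3) B\<^sub>1(2) assms(4) B\<^sub>2(2)])
  next
    case 4
    then show False
      by (rule no_crossing[OF B\<^sub>2(1) B\<^sub>1(1) B\<^sub>2\<^sub>1 B\<^sub>2(2) assms(4) assms(3) B\<^sub>1(2)])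
  qed
qed

lemma hat_disjoint_block_iff:
  assumes a: "a \<in> {1..e}" and q: "q \<in> {1..e}"
  shows "hat e p a \<inter> block p q = {} \<longleftrightarrow> q \<notin> hat e p a"
proof
  show "hat e p a \<inter> block p q = {} \<Longrightarrow> q \<notin> hat e p a"
    using mem_block[OF q] by blast
next
  assume q_out: "q \<notin> hat e p a"
  show "hat e p a \<inter> block p q = {}"
  proof (rule ccontr)
    assume "hat e p a \<inter> block p q \<noteq> {}"
    then obtain w where w_hat: "w \<in> hat e p a" and w_block: "w \<in> block p q"
      by blast
    have far: "e - rdist e p a < cdist e a q"
      using q_out a q by (simp add: hat_eq_arc arc_def)
    have w: "w \<in> {1..e}"
      using block_subset[OF q] w_block by blast
    have blocks: "block p a \<noteq> block p w"
      using q_out block_subset_hat[OF a] block_eq[OF q w_block] mem_block[OF q] by blast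
    then have "w \<noteq> a" "w \<noteq> \<sigma> a"
      using block_kidx[OF a] by auto
    moreover have "cdist e a w \<le> e - rdist e p a"
      using w_hat a by (simp add: hat_eq_arc arc_def)
    moreover have "cdist e a w \<noteq> 0"
      using \<open>w \<noteq> a\<close> cdist_eq_0_iff[OF e_pos a w] by simp
    moreover have "cdist e a w \<noteq> e - rdist e p a"
      using \<open>w \<noteq> \<sigma> a\<close> cdist_inject[OF e_pos w kidx_in[of a], of a] cdist_kidx[OF a]
      by simp
    ultimately have "0 < cdist e a w" "cdist e a w < cdist e a (\<sigma> a)"
      using cdist_kidx[OF a] by simp_all
    moreover have "q \<in> block p w"
      using block_eq[OF q w_block] mem_block[OF q] by simp
    (* going round from a, we meet w, then \<sigma> a, then q: the blocks of a and q cross *)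
    ultimately show False
      using no_cyclic_crossing[OF a w kidx_in_block[OF a] _ blocks] far cdist_kidx[OF a]
      by (metis (no_types))
  qed
qed

lemma kidx_in_hat: "a \<in> {1..e} \<Longrightarrow> \<sigma> a \<in> hat e p a"
  and self_in_hat: "a \<in> {1..e} \<Longrightarrow> a \<in> hat e p a"
  using block_subset_hat kidx_in_block mem_block by blast+

lemma kidx_mem_hat_iff:
  assumes a: "a \<in> {1..e}" and q: "q \<in> {1..e}"
  shows "\<sigma> q \<in> hat e p a \<longleftrightarrow> q \<in> hat e p a"
proof -
  have "\<sigma> ` ({1..e} - hat e p a) \<subseteq> {1..e} - hat e p a"
    using hat_disjoint_block_iff[OF a] kidx_in_block kidx_in by blast
  then show ?thesis
    using inj_on_invariant_mem_iff[OF _ kidx_inj Diff_subset _ q] kidx_in by blast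
qed

definition m1_perm :: "nat \<Rightarrow> nat" where
  "m1_perm x = bar e (int (\<sigma> x) + 1)"

definition m2_perm :: "nat \<Rightarrow> nat" where
  "m2_perm x = bar e (int (inv_into {1..e} \<sigma> x) - 1)"

lemma m1_eq_orbit_partition: "m1 e p = orbit_partition e m1_perm"
  by (simp add: m1_def m1_perm_def[abs_def])

lemma m2_eq_orbit_partition: "m2 e p = orbit_partition e m2_perm"
  by (simp add: m2_def m2_perm_def[abs_def])

lemma m1_perm_maps: "m1_perm ` {1..e} \<subseteq> {1..e}"
  using bar_in[OF e_pos] by (auto simp: m1_perm_def)

lemma m2_perm_maps: "m2_perm ` {1..e} \<subseteq> {1..e}"
  using bar_in[OF e_pos] by (auto simp: m2_perm_def)

lemma m1_perm_inj: "inj_on m1_perm {1..e}"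
proof (rule inj_onI)
  fix x y assume x: "x \<in> {1..e}" and y: "y \<in> {1..e}" and "m1_perm x = m1_perm y"
  then have "\<sigma> x = \<sigma> y"
    unfolding m1_perm_def by (intro bar_add_right_cancel[OF e_pos kidx_in kidx_in])
  then show "x = y"
    using inj_onD[OF kidx_inj _ x y] by blast
qed

lemma inv_kidx_in: "y \<in> {1..e} \<Longrightarrow> inv_into {1..e} \<sigma> y \<in> {1..e}"
  by (rule inv_into_into) (simp only: kidx_image)

lemma kidx_inv_kidx: "y \<in> {1..e} \<Longrightarrow> \<sigma> (inv_into {1..e} \<sigma> y) = y"
  by (rule f_inv_into_f) (simp only: kidx_image)

lemma m2_perm_inj: "inj_on m2_perm {1..e}"
proof (rule inj_onI)
  fix x y assume x: "x \<in> {1..e}" and y: "y \<in> {1..e}" and "m2_perm x = m2_perm y"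
  then have "inv_into {1..e} \<sigma> x = inv_into {1..e} \<sigma> y"
    unfolding m2_perm_def diff_conv_add_uminus
    by (intro bar_add_right_cancel[OF e_pos inv_kidx_in[OF x] inv_kidx_in[OF y]])
  then show "x = y"
    using kidx_inv_kidx[OF x] kidx_inv_kidx[OF y] by metis
qed

lemma m2_perm_kidx: "a \<in> {1..e} \<Longrightarrow> m2_perm (\<sigma> a) = bar e (int a - 1)"
  unfolding m2_perm_def by (subst inv_into_f_f[OF kidx_inj]) simp_all

lemma arc_from_m1_perm:
  assumes a: "a \<in> {1..e}"
  shows "arc e (m1_perm a) (rdist e p a - 1) = ({1..e} - hat e p a) \<union> {a}"
proof -
  have "m1_perm a = bar e (int a + int (e - rdist e p a) + 1)"
    unfolding m1_perm_def kidx_eq[OF a] by (rule bar_bar_add[OF e_pos])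
  moreover have "rdist e p a - 1 = e - (e - rdist e p a) - 1"
    using rdist_bounds[OF a] by simp
  ultimately show ?thesis
    using arc_complement_start[OF e_pos rdist_complement_less[OF a] a] by (simp add: hat_eq_arc[OF a])
qed

lemma arc_from_kidx:
  assumes a: "a \<in> {1..e}"
  shows "arc e (\<sigma> a) (rdist e p a - 1) = ({1..e} - hat e p a) \<union> {\<sigma> a}"
proof -
  have "rdist e p a - 1 = e - (e - rdist e p a) - 1"
    using rdist_bounds[OF a] by simp
  then show ?thesis
    using arc_complement_end[OF e_pos rdist_complement_less[OF a]]
    by (simp add: hat_eq_arc[OF a] kidx_eq[OF a])
qed

lemma m1_perm_arc_invariant:
  assumes a: "a \<in> {1..e}"
  shows "m1_perm ` arc e (m1_perm a) (rdist e p a - 1) \<subseteq> arc e (m1_perm a) (rdist e p a - 1)"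
proof (rule image_subsetI)
  fix z assume "z \<in> arc e (m1_perm a) (rdist e p a - 1)"
  then have z: "z \<in> {1..e}" "z = a \<or> z \<notin> hat e p a"
    unfolding arc_from_m1_perm[OF a] using a by auto
  then have "\<sigma> z \<in> arc e (\<sigma> a) (rdist e p a - 1)"
    unfolding arc_from_kidx[OF a] using kidx_mem_hat_iff[OF a] kidx_in by auto
  then show "m1_perm z \<in> arc e (m1_perm a) (rdist e p a - 1)"
    unfolding m1_perm_def using bar_shift_mem_arc[OF e_pos kidx_in] by simp
qed

lemma m2_perm_arc_invariant:
  assumes a: "a \<in> {1..e}"
  shows "m2_perm ` arc e (\<sigma> a) (rdist e p a - 1) \<subseteq> arc e (\<sigma> a) (rdist e p a - 1)"
proof (rule image_subsetI)
  fix z assume "z \<in> arc e (\<sigma> a) (rdist e p a - 1)"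
  then have z: "z \<in> {1..e}" "z = \<sigma> a \<or> z \<notin> hat e p a"
    unfolding arc_from_kidx[OF a] using kidx_in by auto
  define y where "y = inv_into {1..e} \<sigma> z"
  have y: "y \<in> {1..e}" "\<sigma> y = z"
    unfolding y_def using inv_kidx_in kidx_inv_kidx z(1) by auto
  have "y = a \<or> y \<notin> hat e p a"
    using z(2)
  proof
    assume "z = \<sigma> a"
    then show ?thesis
      using inj_onD[OF kidx_inj _ y(1) a] y(2) by simp
  next
    assume "z \<notin> hat e p a"
    then show ?thesis
      using kidx_mem_hat_iff[OF a y(1)] y(2) by simp
  qed
  then have "y \<in> arc e (m1_perm a) (rdist e p a - 1)"
    unfolding arc_from_m1_perm[OF a] using y(1) by auto
  moreover have "bar e (int (m1_perm a) - 1) = \<sigma> a"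
    using bar_bar_add[OF e_pos, of "int (\<sigma> a) + 1" "- 1"] bar_of_nat[OF e_pos kidx_in]
    by (simp add: m1_perm_def)
  ultimately show "m2_perm z \<in> arc e (\<sigma> a) (rdist e p a - 1)"
    using bar_shift_mem_arc[OF e_pos y(1), of "- 1" "m1_perm a"]
    by (simp add: m2_perm_def y_def)
qed

lemma m1_kidx_hat:
  assumes a: "a \<in> {1..e}"
  shows "kidx e (m1 e p) (m1_perm a) = a"
    and "hat e (m1 e p) (m1_perm a) = ({1..e} - hat e p a) \<union> {a}"
proof -
  have "bar e (int (m1_perm a) + int (rdist e p a - 1)) = bar e (int (\<sigma> a) + 1 + int (rdist e p a - 1))"
    unfolding m1_perm_def by (rule bar_bar_add[OF e_pos])
  also have "\<dots> = a"
    using rdist_bounds(1)[OF a] bar_kidx_add_rdist[OF a] by (simp add: algebra_simps)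
  finally have arc_end: "bar e (int (m1_perm a) + int (rdist e p a - 1)) = a" .
  have "a \<in> orbit m1_perm (m1_perm a)"
    using orbit_swap[OF self_in_orbit[OF m1_perm_maps m1_perm_inj a] orbit.base] .
  then have "bar e (int (m1_perm a) + int (rdist e p a - 1)) \<in> orbit m1_perm (m1_perm a)"
    unfolding arc_end .
  moreover have "m1_perm a \<in> {1..e}"
    using m1_perm_maps a by blast
  moreover have "rdist e p a - 1 < e"
    using rdist_bounds(2)[OF a] e_pos by linarith
  ultimately show "kidx e (m1 e p) (m1_perm a) = a"
    and "hat e (m1 e p) (m1_perm a) = ({1..e} - hat e p a) \<union> {a}"
    using orbit_partition_kidx_hat[OF m1_perm_maps m1_perm_inj _ _ m1_perm_arc_invariant[OF a]]
    unfolding m1_eq_orbit_partition arc_end arc_from_m1_perm[OF a] by simp_all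
qed

lemma m2_kidx_hat:
  assumes a: "a \<in> {1..e}"
  shows "kidx e (m2 e p) (\<sigma> a) = bar e (int a - 1)"
    and "hat e (m2 e p) (\<sigma> a) = ({1..e} - hat e p a) \<union> {\<sigma> a}"
proof -
  have "bar e (int (\<sigma> a) + int (rdist e p a - 1))
      = bar e (int (bar e (int (\<sigma> a) + int (rdist e p a))) + (- 1))"
    using rdist_bounds(1)[OF a] bar_bar_add[OF e_pos, of "int (\<sigma> a) + int (rdist e p a)" "- 1"]
    by (simp add: algebra_simps)
  then have arc_end: "bar e (int (\<sigma> a) + int (rdist e p a - 1)) = m2_perm (\<sigma> a)"
    using bar_kidx_add_rdist[OF a] m2_perm_kidx[OF a] by simp
  have "bar e (int (\<sigma> a) + int (rdist e p a - 1)) \<in> orbit m2_perm (\<sigma> a)"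
    unfolding arc_end by (rule orbit.base)
  moreover have "rdist e p a - 1 < e"
    using rdist_bounds(2)[OF a] e_pos by linarith
  ultimately show "kidx e (m2 e p) (\<sigma> a) = bar e (int a - 1)"
    and "hat e (m2 e p) (\<sigma> a) = ({1..e} - hat e p a) \<union> {\<sigma> a}"
    using orbit_partition_kidx_hat[OF m2_perm_maps m2_perm_inj kidx_in _ m2_perm_arc_invariant[OF a]]
    unfolding m2_eq_orbit_partition arc_end m2_perm_kidx[OF a] arc_from_kidx[OF a] by simp_all
qed

lemma m1_hat_block_disjoint_iff:
  assumes a: "a \<in> {1..e}" and q: "q \<in> {1..e}"
  shows "hat e (m1 e p) (m1_perm a) \<inter> block (m1 e p) q = {} \<longleftrightarrow> q \<in> hat e p a \<and> q \<noteq> a"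
proof -
  have "block (m1 e p) q \<inter> arc e (m1_perm a) (rdist e p a - 1) = {}
      \<longleftrightarrow> q \<notin> arc e (m1_perm a) (rdist e p a - 1)"
    unfolding m1_eq_orbit_partition
    by (rule orbit_partition_block_disjoint_iff[OF m1_perm_maps m1_perm_inj _ m1_perm_arc_invariant[OF a] q])
      (auto simp: arc_def)
  then show ?thesis
    using q unfolding m1_kidx_hat(2)[OF a] arc_from_m1_perm[OF a] by (auto simp: Int_commute)
qed

lemma m2_hat_block_disjoint_iff:
  assumes a: "a \<in> {1..e}" and q: "q \<in> {1..e}"
  shows "hat e (m2 e p) (\<sigma> a) \<inter> block (m2 e p) q = {} \<longleftrightarrow> q \<in> hat e p a \<and> q \<noteq> \<sigma> a"
proof -
  have "block (m2 e p) q \<inter> arc e (\<sigma> a) (rdist e p a - 1) = {}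
      \<longleftrightarrow> q \<notin> arc e (\<sigma> a) (rdist e p a - 1)"
    unfolding m2_eq_orbit_partition
    by (rule orbit_partition_block_disjoint_iff[OF m2_perm_maps m2_perm_inj _ m2_perm_arc_invariant[OF a] q])
      (auto simp: arc_def)
  then show ?thesis
    using q unfolding m2_kidx_hat(2)[OF a] arc_from_kidx[OF a] by (auto simp: Int_commute)
qed

lemma block_m1_m1_perm:
  assumes q: "q \<in> {1..e}"
  shows "block (m1 e p) (m1_perm q) = block (m1 e p) q"
proof -
  have q': "m1_perm q \<in> {1..e}"
    using m1_perm_maps q by blast
  show ?thesis
    unfolding m1_eq_orbit_partition block_orbit_partition[OF m1_perm_maps m1_perm_inj q]
      block_orbit_partition[OF m1_perm_maps m1_perm_inj q']
    by (rule self_in_orbit_step[OF self_in_orbit[OF m1_perm_maps m1_perm_inj q]])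
qed

end

section \<open>Syzygies of the uniserial families\<close>

lemma Mmod_eq: "Mmod e i j t = (i, t * e + cdist e i j + 1)"
  by (simp add: Mmod_def cdist_def)

lemma syzygy_length:
  fixes D t d e :: nat
  assumes "t \<le> D" "d < e"
  shows "(D + 1) * e + 1 - (t * e + d + 1) = (D - t) * e + (e - 1 - d) + 1"
proof -
  obtain k where "D = t + k"
    using assms(1) le_Suc_ex by blast
  then show ?thesis
    using assms(2) by (simp add: algebra_simps)
qed

lemma Mmod_length_le:
  assumes "0 < e" "t \<le> D"
  shows "snd (Mmod e i j t) \<le> (D + 1) * e"
proof -
  have "t * e \<le> D * e" "(D + 1) * e = D * e + e"
    using assms(2) by simp_all
  then show ?thesis
    using cdist_less[OF assms(1), of i j] unfolding Mmod_eq snd_conv by linarith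
qed

lemma syz_Mmod:
  assumes e: "0 < e" and "t \<le> D" and j: "j \<in> {1..e}"
  shows "syz e ((D + 1) * e) (Mmod e i j t) = Mmod e (bar e (int j + 1)) i (D - t)"
proof -
  have "int i + int (t * e + cdist e i j + 1) = int i + int (cdist e i j) + 1 + int t * int e"
    by simp
  then have "bar e (int i + int (t * e + cdist e i j + 1)) = bar e (int (bar e (int i + int (cdist e i j))) + 1)"
    by (simp only: bar_add_mult[OF e] bar_bar_add[OF e])
  then show ?thesis
    using assms syzygy_length cdist_less[OF e, of i j]
    by (simp add: syz_def Mmod_eq bar_add_cdist cdist_reverse)
qed

lemma cosyz_Mmod:
  assumes e: "0 < e" and "t \<le> D" and j: "j \<in> {1..e}"
  shows "cosyz e ((D + 1) * e) (Mmod e i j t) = Mmod e j (bar e (int i - 1)) (D - t)"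
proof -
  have "int i + int (t * e + cdist e i j + 1) - 1 - int ((D + 1) * e)
      = int i + int (cdist e i j) + (int t - int D - 1) * int e"
    by (simp add: algebra_simps)
  then have "bar e (int i + int (t * e + cdist e i j + 1) - 1 - int ((D + 1) * e)) = j"
    by (simp only: bar_add_mult[OF e] bar_add_cdist[OF e j])
  then show ?thesis
    using assms syzygy_length cdist_less[OF e, of i j]
    by (simp add: cosyz_def Mmod_eq cdist_reverse)
qed

definition uniserial_family :: "nat \<Rightarrow> nat set set \<Rightarrow> (nat \<Rightarrow> nat) \<Rightarrow> umod set" where
  "uniserial_family e P t = (\<lambda>a. Mmod e a (kidx e P a) (t a)) ` {1..e}"

lemma Lset_eq_uniserial_family:
  "Lset e l P k = uniserial_family e P (\<lambda>a. if hat e P a \<inter> block P k = {} then 0 else l div e - 1)"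
  unfolding Lset_def uniserial_family_def by (rule Setcompr_eq_image)

lemma Sset_eq_uniserial_family:
  "Sset e l P k =
    uniserial_family e P (\<lambda>a. if hat e P a \<inter> block P k = {} \<or> a = k then 0 else l div e - 1)"
  unfolding Sset_def uniserial_family_def by (rule Setcompr_eq_image)

lemma uniserial_family_nonprojective:
  assumes "0 < e" "\<And>a. a \<in> {1..e} \<Longrightarrow> t a \<le> D"
  shows "{X \<in> uniserial_family e P t. snd X \<le> (D + 1) * e} = uniserial_family e P t"
  using Mmod_length_le[OF assms] unfolding uniserial_family_def by blast

context noncrossing_partition
begin

lemma m1_perm_image: "m1_perm ` {1..e} = {1..e}"
  by (intro endo_inj_surj m1_perm_maps m1_perm_inj) simp

lemma Omega_uniserial_family:
  assumes l: "l = (D + 1) * e" and t: "\<And>a. a \<in> {1..e} \<Longrightarrow> t a \<le> D"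
    and t': "\<And>a. a \<in> {1..e} \<Longrightarrow> t' (m1_perm a) = D - t a"
  shows "Omega e l (uniserial_family e p t) = uniserial_family e (m1 e p) t'"
proof -
  let ?M = "\<lambda>b. Mmod e b (kidx e (m1 e p) b) (t' b)"
  have "Omega e l (uniserial_family e p t) = syz e l ` uniserial_family e p t"
    unfolding Omega_def l by (simp only: uniserial_family_nonprojective[OF e_pos t])
  also have "\<dots> = (\<lambda>a. syz e l (Mmod e a (\<sigma> a) (t a))) ` {1..e}"
    unfolding uniserial_family_def by (rule image_image)
  also have "\<dots> = (\<lambda>a. ?M (m1_perm a)) ` {1..e}"
    using syz_Mmod[OF e_pos t kidx_in] t' m1_kidx_hat(1) unfolding l
    by (intro image_cong) (simp_all add: m1_perm_def)
  also have "\<dots> = uniserial_family e (m1 e p) t'"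
    unfolding uniserial_family_def image_image[of ?M m1_perm, symmetric] m1_perm_image ..
  finally show ?thesis .
qed

lemma Omega_inv_uniserial_family:
  assumes l: "l = (D + 1) * e" and t: "\<And>a. a \<in> {1..e} \<Longrightarrow> t a \<le> D"
    and t': "\<And>a. a \<in> {1..e} \<Longrightarrow> t' (\<sigma> a) = D - t a"
  shows "Omega_inv e l (uniserial_family e p t) = uniserial_family e (m2 e p) t'"
proof -
  let ?M = "\<lambda>b. Mmod e b (kidx e (m2 e p) b) (t' b)"
  have "Omega_inv e l (uniserial_family e p t) = cosyz e l ` uniserial_family e p t"
    unfolding Omega_inv_def l by (simp only: uniserial_family_nonprojective[OF e_pos t])
  also have "\<dots> = (\<lambda>a. cosyz e l (Mmod e a (\<sigma> a) (t a))) ` {1..e}"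
    unfolding uniserial_family_def by (rule image_image)
  also have "\<dots> = (\<lambda>a. ?M (\<sigma> a)) ` {1..e}"
    using cosyz_Mmod[OF e_pos t kidx_in] t' m2_kidx_hat(1) unfolding l
    by (intro image_cong) simp_all
  also have "\<dots> = uniserial_family e (m2 e p) t'"
    unfolding uniserial_family_def image_image[of ?M \<sigma>, symmetric] kidx_image ..
  finally show ?thesis .
qed

theorem syzygies_of_uniserial_families:
  assumes l: "e dvd l" "0 < l" and q: "q \<in> {1..e}"
  shows "Omega e l (Sset e l p q) = Lset e l (m1 e p) q"
    and "Omega_inv e l (Lset e l p q) = Sset e l (m2 e p) q"
    and "Omega_inv e l (Sset e l p q) = Lset e l (m2 e p) (\<sigma> q)"
    and "Omega e l (Lset e l p q) = Sset e l (m1 e p) (m1_perm q)"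
proof -
  define D where "D = l div e - 1"
  have l_eq: "l = (D + 1) * e"
  proof -
    obtain k where k: "l = e * k"
      using l(1) by blast
    with l(2) e_pos have "D + 1 = k"
      unfolding D_def by simp
    with k show ?thesis
      by simp
  qed
  have Sset_eq: "Sset e l P k =
      uniserial_family e P (\<lambda>a. if hat e P a \<inter> block P k = {} \<or> a = k then 0 else D)" for P k
    unfolding D_def by (rule Sset_eq_uniserial_family)
  have Lset_eq: "Lset e l P k =
      uniserial_family e P (\<lambda>a. if hat e P a \<inter> block P k = {} then 0 else D)" for P k
    unfolding D_def by (rule Lset_eq_uniserial_family)
  note simps = hat_disjoint_block_iff[OF _ q] m1_hat_block_disjoint_iff[OF _ q]
    m2_hat_block_disjoint_iff[OF _ q] inj_on_eq_iff[OF kidx_inj _ q] inj_on_eq_iff[OF kidx_inj q]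
    inj_on_eq_iff[OF m1_perm_inj _ q] inj_on_eq_iff[OF m1_perm_inj q]
    m2_hat_block_disjoint_iff[OF _ kidx_in] kidx_mem_hat_iff[OF _ q] block_m1_m1_perm[OF q]
  show "Omega e l (Sset e l p q) = Lset e l (m1 e p) q"
    unfolding Sset_eq Lset_eq
    by (rule Omega_uniserial_family[OF l_eq]) (auto simp: simps)
  show "Omega_inv e l (Lset e l p q) = Sset e l (m2 e p) q"
    unfolding Sset_eq Lset_eq
    by (rule Omega_inv_uniserial_family[OF l_eq]) (auto simp: simps kidx_in_hat)
  show "Omega_inv e l (Sset e l p q) = Lset e l (m2 e p) (\<sigma> q)"
    unfolding Sset_eq Lset_eq
    by (rule Omega_inv_uniserial_family[OF l_eq]) (auto simp: simps)
  show "Omega e l (Lset e l p q) = Sset e l (m1 e p) (m1_perm q)"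
    unfolding Sset_eq Lset_eq
    by (rule Omega_uniserial_family[OF l_eq]) (auto simp: simps self_in_hat)
qed

end

section \<open>Lifting along the covering\<close>

lemma mod_eq_iff_int_mod_eq: "(a::nat) mod e = b mod e \<longleftrightarrow> int a mod int e = int b mod int e"
  by (simp flip: of_nat_mod)

lemma int_bar_mod_dvd:
  assumes "0 < n" "e dvd n"
  shows "int (bar n x) mod int e = x mod int e"
proof -
  have "int e dvd int n"
    using assms(2) by simp
  then have "int (bar n x) mod int e = int (bar n x) mod int n mod int e"
    by (simp add: mod_mod_cancel)
  also have "\<dots> = x mod int n mod int e"
    by (simp only: int_bar_mod[OF assms(1)])
  also have "\<dots> = x mod int e"
    using \<open>int e dvd int n\<close> by (simp add: mod_mod_cancel)
  finally show ?thesis .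
qed

lemma bar_mod_eq_bar_mod_dvd:
  assumes "0 < e" "0 < n" "e dvd n" "x mod int e = y mod int e"
  shows "bar e x mod e = bar n y mod e"
  unfolding mod_eq_iff_int_mod_eq int_bar_mod[OF assms(1)] int_bar_mod_dvd[OF assms(2,3)]
  by (rule assms(4))

lemma mem_lift_iff: "(j, L) \<in> lift n e Y \<longleftrightarrow> j \<in> {1..n} \<and> (\<exists>a. (a, L) \<in> Y \<and> a mod e = j mod e)"
  by (simp add: lift_def)

lemma lift_image_top_shift:
  fixes \<delta> :: "nat \<Rightarrow> int" and \<phi> :: "nat \<Rightarrow> nat" and P :: "nat \<Rightarrow> bool"
  assumes e: "0 < e" and n: "0 < n" and dvd: "e dvd n"
  defines "T m X \<equiv> (bar m (int (fst X) + \<delta> (snd X)), \<phi> (snd X))"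
  shows "T n ` {X \<in> lift n e Y. P (snd X)} = lift n e (T e ` {X \<in> Y. P (snd X)})"
proof (intro set_eqI iffI)
  fix z assume "z \<in> T n ` {X \<in> lift n e Y. P (snd X)}"
  then obtain i L where iL: "(i, L) \<in> lift n e Y" "P L" "z = T n (i, L)"
    by auto
  then obtain a where a: "(a, L) \<in> Y" "a mod e = i mod e"
    unfolding mem_lift_iff by blast
  have "bar e (int a + \<delta> L) mod e = bar n (int i + \<delta> L) mod e"
    using a(2) by (intro bar_mod_eq_bar_mod_dvd[OF e n dvd] mod_add_cong)
      (simp_all add: mod_eq_iff_int_mod_eq)
  moreover have "(bar e (int a + \<delta> L), \<phi> L) \<in> T e ` {X \<in> Y. P (snd X)}"
    unfolding T_def using a(1) iL(2) by force
  ultimately have "(bar n (int i + \<delta> L), \<phi> L) \<in> lift n e (T e ` {X \<in> Y. P (snd X)})"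
    unfolding mem_lift_iff using bar_in[OF n] by blast
  then show "z \<in> lift n e (T e ` {X \<in> Y. P (snd X)})"
    by (simp add: iL(3) T_def)
next
  fix z assume z_in: "z \<in> lift n e (T e ` {X \<in> Y. P (snd X)})"
  obtain j L' where z_eq: "z = (j, L')"
    by (cases z)
  with z_in obtain a' where z: "z = (j, L')" "j \<in> {1..n}" "(a', L') \<in> T e ` {X \<in> Y. P (snd X)}"
    and a': "a' mod e = j mod e"
    unfolding z_eq mem_lift_iff by blast
  then obtain a L where aL: "(a, L) \<in> Y" "P L" "a' = bar e (int a + \<delta> L)" "L' = \<phi> L"
    unfolding T_def by auto
  define i where "i = bar n (int j - \<delta> L)"
  have "int i mod int e = (int j - \<delta> L) mod int e"
    unfolding i_def by (rule int_bar_mod_dvd[OF n dvd])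
  also have "\<dots> = (int a + \<delta> L - \<delta> L) mod int e"
    using a' unfolding mod_eq_iff_int_mod_eq aL(3) int_bar_mod[OF e]
    by (intro mod_diff_cong) simp_all
  finally have "(i, L) \<in> lift n e Y"
    unfolding mem_lift_iff mod_eq_iff_int_mod_eq i_def using aL(1) bar_in[OF n] by auto
  moreover have "T n (i, L) = z"
    using bar_bar_add[OF n, of "int j - \<delta> L" "\<delta> L"] bar_of_nat[OF n z(2)]
    by (simp add: T_def i_def z(1) aL(4))
  ultimately show "z \<in> T n ` {X \<in> lift n e Y. P (snd X)}"
    using aL(2) by force
qed

lemma Omega_lift:
  assumes "0 < e" "0 < n" "e dvd n"
  shows "Omega n l (lift n e Y) = lift n e (Omega e l Y)"
  using lift_image_top_shift[OF assms, of "\<lambda>L. int L" "\<lambda>L. l + 1 - L" Y "\<lambda>L. L \<le> l"]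
  by (simp add: Omega_def syz_def[abs_def])

lemma Omega_inv_lift:
  assumes "0 < e" "0 < n" "e dvd n"
  shows "Omega_inv n l (lift n e Y) = lift n e (Omega_inv e l Y)"
  using lift_image_top_shift[OF assms, of "\<lambda>L. int L - 1 - int l" "\<lambda>L. l + 1 - L" Y "\<lambda>L. L \<le> l"]
  by (simp add: Omega_inv_def cosyz_def[abs_def] algebra_simps)

theorem theorem5p8:
  fixes n l i :: nat and p :: "nat set set"
  defines "e \<equiv> gcd n l"
  assumes "0 < n" and "0 < l"
    and "noncrossing e p"
    and "1 \<le> i" and "i \<le> e"
  shows "Omega n l (Sset' n l p i) = Lset' n l (m1 e p) i
       \<and> Omega_inv n l (Lset' n l p i) = Sset' n l (m2 e p) i
       \<and> Omega_inv n l (Sset' n l p i) = Lset' n l (m2 e p) (kidx e p i)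
       \<and> Omega n l (Lset' n l p i) = Sset' n l (m1 e p) (bar e (int (kidx e p i) + 1))"
proof -
  have e: "0 < e" "e dvd n" "e dvd l"
    using assms(2) unfolding e_def by auto
  interpret noncrossing_partition e p
    using e(1) assms(4) by unfold_locales
  have lifted: "Sset' n l P k = lift n e (Sset e l P k)" "Lset' n l P k = lift n e (Lset e l P k)"
    for P k by (simp_all add: Sset'_def Lset'_def e_def)
  show ?thesis
    unfolding lifted Omega_lift[OF e(1) assms(2) e(2)] Omega_inv_lift[OF e(1) assms(2) e(2)]
    using syzygies_of_uniserial_families[OF e(3) assms(3)] assms(5,6) by (simp add: m1_perm_def)
qed

end
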